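(* Fix $\nu>1$, let $F_{\text{exist}}=\nu(\nu+1)$, $F_{\text{2d}}=\nu(\nu+1)/\sqrt{\nu^2+\nu-1}$, and $2<F<F_{\text{2d}}$. For $\theta\in[0,2\pi]$, $\mu\in\mathbb{R}$ define $$\ell_1(\theta,\mu)=\tfrac{\cos\theta F_{\text{exist}}+F}{FF_{\text{exist}}}\mu-\tfrac12\cos^2\theta-\tfrac F2\cos\theta-\tfrac12,\quad \ell_2(\theta,\mu)=-\tfrac{\cos\theta F_{\text{exist}}+F}{FF_{\text{exist}}}\mu-\tfrac12\cos^2\theta+\tfrac F2\cos\theta-\tfrac12,$$ $$\ell_3(\theta,\mu)=\tfrac{\mu}{F_{\text{exist}}}-\sin^2\theta-1,$$ and let $I$ be the open interval with endpoints $\frac{F^2}{2}-\frac{F^2}{F_{\text{exist}}}\mp\frac{F}{F_{\text{2d}}}\sqrt{F_{\text{2d}}^2-F^2}$. Then the midpoint $\mu_{L,opt}=\frac{F^2}{2}-\frac{F^2}{F_{\text{exist}}}$ of $I$ minimizes over $\mu\in I$ the quantity $\max_{\theta\in[0,2\pi]}\max\{\ell_1(\theta,\mu),\ell_2(\theta,\mu)\}$, and for all $\theta\in[0,2\pi]$, $$\ell_1(\theta,\mu_{L,opt}),\ \ell_2(\theta,\mu_{L,opt})\le\frac{F^2-F_{\text{2d}}^2}{2F_{\text{2d}}^2}<0,\qquad \ell_3(\theta,\mu_{L,opt})\le\frac{F_{\text{exist}}-2}{2F_{\text{exist}}^2}F^2-1<0.$$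
   Context: The functions $\ell_j(\theta,\mu)$ are the leading-order real parts of the three $\mu$-weighted dispersion relations at the upstream endstate of a hydraulic shock of the inviscid Saint-Venant equations in the limit $(k,\eta)=r(\cos\theta,\sin\theta)$, $r\to\infty$. *)

theory Defs
  imports Complex_Main
begin

definition F_exist :: "real \<Rightarrow> real" where
  "F_exist \<nu> = \<nu> * (\<nu> + 1)"

definition F_2d :: "real \<Rightarrow> real" where
  "F_2d \<nu> = \<nu> * (\<nu> + 1) / sqrt (\<nu>\<^sup>2 + \<nu> - 1)"

definition ell1 :: "real \<Rightarrow> real \<Rightarrow> real \<Rightarrow> real \<Rightarrow> real" where
  "ell1 \<nu> F \<theta> \<mu> =
     (cos \<theta> * F_exist \<nu> + F) / (F * F_exist \<nu>) * \<mu>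
     - (cos \<theta>)\<^sup>2 / 2 - F / 2 * cos \<theta> - 1 / 2"

definition ell2 :: "real \<Rightarrow> real \<Rightarrow> real \<Rightarrow> real \<Rightarrow> real" where
  "ell2 \<nu> F \<theta> \<mu> =
     - ((cos \<theta> * F_exist \<nu> + F) / (F * F_exist \<nu>)) * \<mu>
     - (cos \<theta>)\<^sup>2 / 2 + F / 2 * cos \<theta> - 1 / 2"

definition ell3 :: "real \<Rightarrow> real \<Rightarrow> real \<Rightarrow> real \<Rightarrow> real" where
  "ell3 \<nu> F \<theta> \<mu> = \<mu> / F_exist \<nu> - (sin \<theta>)\<^sup>2 - 1"

definition mu_opt :: "real \<Rightarrow> real \<Rightarrow> real" where
  "mu_opt \<nu> F = F\<^sup>2 / 2 - F\<^sup>2 / F_exist \<nu>"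

definition half_width :: "real \<Rightarrow> real \<Rightarrow> real" where
  "half_width \<nu> F = F / F_2d \<nu> * sqrt ((F_2d \<nu>)\<^sup>2 - F\<^sup>2)"

definition I_int :: "real \<Rightarrow> real \<Rightarrow> real set" where
  "I_int \<nu> F = {mu_opt \<nu> F - half_width \<nu> F <..< mu_opt \<nu> F + half_width \<nu> F}"

definition maxL12 :: "real \<Rightarrow> real \<Rightarrow> real \<Rightarrow> real" where
  "maxL12 \<nu> F \<mu> = Sup ((\<lambda>\<theta>. max (ell1 \<nu> F \<theta> \<mu>) (ell2 \<nu> F \<theta> \<mu>)) ` {0..2*pi})"

end

theory Submission
  imports Defs
begin

text \<open>Write \<open>E = F_exist \<nu>\<close>. At the midpoint \<open>mu_opt\<close>, \<open>ell1\<close> and \<open>ell2\<close> are the level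
  \<open>F\<^sup>2 (E - 1) / (2 E\<^sup>2) - 1/2 = (F\<^sup>2 - F_2d\<^sup>2) / (2 F_2d\<^sup>2)\<close> minus a square in \<open>cos \<theta>\<close>
  (and, for \<open>ell2\<close>, minus \<open>F\<^sup>2 (E - 2) / E\<^sup>2 \<ge> 0\<close>), so they never exceed that level. Conversely, at
  the angle with \<open>cos \<theta> = -F/E\<close> the \<open>\<mu>\<close>-coefficient of \<open>ell1\<close> vanishes, so \<open>ell1\<close> attains the
  level for every \<open>\<mu>\<close>: the midpoint minimises \<open>maxL12\<close> over all of \<open>\<real>\<close>, not only over \<open>I_int\<close>.\<close>

definition minmax_level :: "real \<Rightarrow> real \<Rightarrow> real" where
  "minmax_level \<nu> F = F\<^sup>2 * (F_exist \<nu> - 1) / (2 * (F_exist \<nu>)\<^sup>2) - 1 / 2"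

lemma F_exist_gt_2:
  assumes "\<nu> > 1"
  shows "F_exist \<nu> > 2"
  using mult_strict_mono[of 1 \<nu> 2 "\<nu> + 1"] assms by (simp add: F_exist_def)

lemma F_2d_squared:
  assumes "\<nu> > 1"
  shows "(F_2d \<nu>)\<^sup>2 = (F_exist \<nu>)\<^sup>2 / (F_exist \<nu> - 1)"
proof -
  have "\<nu>\<^sup>2 + \<nu> - 1 = F_exist \<nu> - 1"
    by (simp add: F_exist_def power2_eq_square algebra_simps)
  moreover have "F_exist \<nu> - 1 > 0"
    using F_exist_gt_2[OF assms] by simp
  ultimately show ?thesis
    by (simp add: F_2d_def power_divide flip: F_exist_def)
qed

lemma less_F_2d_imp_sq_bound:
  assumes "\<nu> > 1" and "0 \<le> F" and "F < F_2d \<nu>"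
  shows "F\<^sup>2 * (F_exist \<nu> - 1) < (F_exist \<nu>)\<^sup>2"
proof -
  have "F\<^sup>2 < (F_2d \<nu>)\<^sup>2"
    using assms by (intro power_strict_mono) auto
  then show ?thesis
    using F_exist_gt_2[OF assms(1)] by (simp add: F_2d_squared[OF assms(1)] field_simps)
qed

lemma less_F_2d_imp_less_F_exist:
  assumes "\<nu> > 1" and "0 \<le> F" and "F < F_2d \<nu>"
  shows "F < F_exist \<nu>"
proof (rule power_less_imp_less_base)
  have "F\<^sup>2 \<le> F\<^sup>2 * (F_exist \<nu> - 1)"
    using F_exist_gt_2[OF assms(1)] by (simp add: mult_le_cancel_left1)
  then show "F\<^sup>2 < (F_exist \<nu>)\<^sup>2"
    using less_F_2d_imp_sq_bound[OF assms] by linarith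
  show "0 \<le> F_exist \<nu>"
    using F_exist_gt_2[OF assms(1)] by simp
qed

lemma minmax_level_neg:
  assumes "\<nu> > 1" and "0 \<le> F" and "F < F_2d \<nu>"
  shows "minmax_level \<nu> F < 0"
  using less_F_2d_imp_sq_bound[OF assms] F_exist_gt_2[OF assms(1)]
  by (simp add: minmax_level_def field_simps)

lemma ell3_bound_neg:
  assumes "\<nu> > 1" and "0 \<le> F" and "F < F_2d \<nu>"
  shows "(F_exist \<nu> - 2) / (2 * (F_exist \<nu>)\<^sup>2) * F\<^sup>2 - 1 < 0"
proof -
  have "(F_exist \<nu> - 2) * F\<^sup>2 \<le> (F_exist \<nu> - 1) * F\<^sup>2"
    by (simp add: mult_right_mono)
  also have "\<dots> < (F_exist \<nu>)\<^sup>2"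
    using less_F_2d_imp_sq_bound[OF assms] by (simp add: mult.commute)
  also have "\<dots> < 2 * (F_exist \<nu>)\<^sup>2"
    using F_exist_gt_2[OF assms(1)] by simp
  finally show ?thesis
    using F_exist_gt_2[OF assms(1)] by (simp add: field_simps)
qed

lemma minmax_level_eq:
  assumes "\<nu> > 1"
  shows "minmax_level \<nu> F = (F\<^sup>2 - (F_2d \<nu>)\<^sup>2) / (2 * (F_2d \<nu>)\<^sup>2)"
  unfolding minmax_level_def F_2d_squared[OF assms]
  using F_exist_gt_2[OF assms] by (simp add: field_simps power2_eq_square)

lemma ell1_mu_opt:
  assumes "F_exist \<nu> \<noteq> 0" and "F \<noteq> 0"
  shows "ell1 \<nu> F \<theta> (mu_opt \<nu> F) = minmax_level \<nu> F - (cos \<theta> + F / F_exist \<nu>)\<^sup>2 / 2"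
  using assms
  by (simp add: ell1_def mu_opt_def minmax_level_def field_simps power2_eq_square)

lemma ell2_mu_opt:
  assumes "F_exist \<nu> \<noteq> 0" and "F \<noteq> 0"
  shows "ell2 \<nu> F \<theta> (mu_opt \<nu> F) = minmax_level \<nu> F - (cos \<theta> - F / F_exist \<nu>)\<^sup>2 / 2
           - F\<^sup>2 * (F_exist \<nu> - 2) / (F_exist \<nu>)\<^sup>2"
  using assms
  by (simp add: ell2_def mu_opt_def minmax_level_def field_simps power2_eq_square)

lemma ell12_mu_opt_le_minmax_level:
  assumes "F_exist \<nu> \<ge> 2" and "F \<noteq> 0"
  shows "ell1 \<nu> F \<theta> (mu_opt \<nu> F) \<le> minmax_level \<nu> F \<and> ell2 \<nu> F \<theta> (mu_opt \<nu> F) \<le> minmax_level \<nu> F"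
proof -
  have "0 \<le> F\<^sup>2 * (F_exist \<nu> - 2) / (F_exist \<nu>)\<^sup>2"
    using assms by simp
  moreover have "0 \<le> (cos \<theta> + F / F_exist \<nu>)\<^sup>2 / 2" "0 \<le> (cos \<theta> - F / F_exist \<nu>)\<^sup>2 / 2"
    by simp_all
  ultimately show ?thesis
    using ell1_mu_opt[of \<nu> F \<theta>] ell2_mu_opt[of \<nu> F \<theta>] assms by linarith
qed

lemma ell3_mu_opt:
  assumes "F_exist \<nu> \<noteq> 0"
  shows "ell3 \<nu> F \<theta> (mu_opt \<nu> F) = (F_exist \<nu> - 2) / (2 * (F_exist \<nu>)\<^sup>2) * F\<^sup>2 - (sin \<theta>)\<^sup>2 - 1"
  using assms
  by (simp add: ell3_def mu_opt_def field_simps power2_eq_square)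

lemma ell1_at_critical_angle:
  assumes "F_exist \<nu> \<noteq> 0" and "F \<noteq> 0" and "cos \<theta> = - F / F_exist \<nu>"
  shows "ell1 \<nu> F \<theta> \<mu> = minmax_level \<nu> F"
  unfolding ell1_def minmax_level_def assms(3)
  using assms(1,2) by (simp add: field_simps power2_eq_square)

lemma continuous_on_max_ell12:
  "continuous_on S (\<lambda>\<theta>. max (ell1 \<nu> F \<theta> \<mu>) (ell2 \<nu> F \<theta> \<mu>))"
  unfolding ell1_def ell2_def divide_inverse by (intro continuous_intros)

lemma max_ell12_le_maxL12:
  assumes "\<theta> \<in> {0..2*pi}"
  shows "max (ell1 \<nu> F \<theta> \<mu>) (ell2 \<nu> F \<theta> \<mu>) \<le> maxL12 \<nu> F \<mu>"
  unfolding maxL12_def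
proof (rule cSup_upper)
  obtain \<theta>\<^sub>0 where "\<forall>\<theta>\<in>{0..2*pi}.
      max (ell1 \<nu> F \<theta> \<mu>) (ell2 \<nu> F \<theta> \<mu>) \<le> max (ell1 \<nu> F \<theta>\<^sub>0 \<mu>) (ell2 \<nu> F \<theta>\<^sub>0 \<mu>)"
    using continuous_attains_sup[OF compact_Icc _ continuous_on_max_ell12, of 0 "2*pi"] by blast
  then show "bdd_above ((\<lambda>\<theta>. max (ell1 \<nu> F \<theta> \<mu>) (ell2 \<nu> F \<theta> \<mu>)) ` {0..2*pi})"
    by (intro bdd_aboveI2) blast
qed (use assms in blast)

lemma maxL12_le:
  assumes "\<And>\<theta>. \<theta> \<in> {0..2*pi} \<Longrightarrow> ell1 \<nu> F \<theta> \<mu> \<le> M \<and> ell2 \<nu> F \<theta> \<mu> \<le> M"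
  shows "maxL12 \<nu> F \<mu> \<le> M"
  unfolding maxL12_def using assms by (intro cSup_least) auto

lemma minmax_level_le_maxL12:
  assumes "F_exist \<nu> > 0" and "0 < F" and "F \<le> F_exist \<nu>"
  shows "minmax_level \<nu> F \<le> maxL12 \<nu> F \<mu>"
proof -
  define \<theta> where "\<theta> = arccos (- F / F_exist \<nu>)"
  have ratio: "0 \<le> F / F_exist \<nu>" "F / F_exist \<nu> \<le> 1"
    using assms by simp_all
  then have "cos \<theta> = - F / F_exist \<nu>"
    by (simp add: \<theta>_def cos_arccos)
  then have "ell1 \<nu> F \<theta> \<mu> = minmax_level \<nu> F"
    using assms by (intro ell1_at_critical_angle) auto
  moreover have "\<theta> \<in> {0..2*pi}"
    using arccos_lbound[of "- F / F_exist \<nu>"] arccos_ubound[of "- F / F_exist \<nu>"] ratio pi_gt_zero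
    by (simp add: \<theta>_def)
  ultimately show ?thesis
    using max_ell12_le_maxL12[of \<theta> \<nu> F \<mu>] by simp
qed

theorem mainTheorem6:
  fixes \<nu> F :: real
  assumes "\<nu> > 1" and "2 < F" and "F < F_2d \<nu>"
  shows "mu_opt \<nu> F \<in> I_int \<nu> F
    \<and> (\<forall>\<mu>\<in>I_int \<nu> F. maxL12 \<nu> F (mu_opt \<nu> F) \<le> maxL12 \<nu> F \<mu>)
    \<and> (\<forall>\<theta>\<in>{0..2*pi}.
          ell1 \<nu> F \<theta> (mu_opt \<nu> F) \<le> (F\<^sup>2 - (F_2d \<nu>)\<^sup>2) / (2 * (F_2d \<nu>)\<^sup>2)
        \<and> ell2 \<nu> F \<theta> (mu_opt \<nu> F) \<le> (F\<^sup>2 - (F_2d \<nu>)\<^sup>2) / (2 * (F_2d \<nu>)\<^sup>2)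
        \<and> ell3 \<nu> F \<theta> (mu_opt \<nu> F) \<le> (F_exist \<nu> - 2) / (2 * (F_exist \<nu>)\<^sup>2) * F\<^sup>2 - 1)
    \<and> (F\<^sup>2 - (F_2d \<nu>)\<^sup>2) / (2 * (F_2d \<nu>)\<^sup>2) < 0
    \<and> (F_exist \<nu> - 2) / (2 * (F_exist \<nu>)\<^sup>2) * F\<^sup>2 - 1 < 0"
proof -
  have F: "0 \<le> F"
    using assms(2) by simp
  have E: "F_exist \<nu> > 2"
    using F_exist_gt_2[OF assms(1)] .
  have ell12: "ell1 \<nu> F \<theta> (mu_opt \<nu> F) \<le> minmax_level \<nu> F \<and> ell2 \<nu> F \<theta> (mu_opt \<nu> F) \<le> minmax_level \<nu> F"
    for \<theta>
    using ell12_mu_opt_le_minmax_level E assms(2) by simp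
  have "half_width \<nu> F > 0"
    using assms power_strict_mono[of F "F_2d \<nu>" 2] by (simp add: half_width_def)
  then have "mu_opt \<nu> F \<in> I_int \<nu> F"
    by (simp add: I_int_def)
  moreover have "maxL12 \<nu> F (mu_opt \<nu> F) \<le> maxL12 \<nu> F \<mu>" for \<mu>
  proof -
    have "minmax_level \<nu> F \<le> maxL12 \<nu> F \<mu>"
      using less_F_2d_imp_less_F_exist[OF assms(1) F assms(3)] E assms(2)
      by (intro minmax_level_le_maxL12) auto
    then show ?thesis
      using maxL12_le[OF ell12] by linarith
  qed
  moreover have "ell3 \<nu> F \<theta> (mu_opt \<nu> F) \<le> (F_exist \<nu> - 2) / (2 * (F_exist \<nu>)\<^sup>2) * F\<^sup>2 - 1" for \<theta>
    using E by (simp add: ell3_mu_opt)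
  ultimately show ?thesis
    using ell12 minmax_level_neg[OF assms(1) F assms(3)] ell3_bound_neg[OF assms(1) F assms(3)]
    by (simp add: minmax_level_eq[OF assms(1)])
qed

end
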